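(* Let $H=\mathbb{E}_{\mathbf{x}\sim\gamma}\big[\mathbf{x}\,(\nabla\log p(\mathbf{x})+\mathbf{x})^\top\big]$ and suppose $H$ is symmetric with eigendecomposition $H=VDV^\top$, $V$ orthogonal, $D=\mathrm{diag}(\nu_1,\dots,\nu_d)$. Then over all orthogonal $R\in\mathbb{R}^{d\times d}$, the quantity $\sum_{i=1}^d(RHR^\top)_{ii}^2$ is maximized at $R=V^\top$, and for this $R$, $$\tilde I(\gamma,p_R)\ge\sum_{i=1}^d\nu_i^2.$$
   Context: $\gamma=\mathcal{N}(0,I_d)$. Standing assumptions: $p$ is a positive, continuously differentiable probability density on $\mathbb{R}^d$ with $|\log p(\mathbf{x})|\le c(1+\|\mathbf{x}\|_2^m)$ and $\|\nabla\log p(\mathbf{x})\|_2\le c(1+\|\mathbf{x}\|_2^m)$ for some $c>0,m\ge2$. (If $p$ is twice differentiable with suitable integrability, Stein's identity gives $H=\mathbb{E}_\gamma[\nabla^2\log p+I_d]$, which is symmetric.) For orthogonal $R$, $p_R(\mathbf{x})=p(R^\top\mathbf{x})$. For a product density $q$, $\tilde I(q,p)=\sum_{i=1}^d \mathbb{E}_{q}\big[\big(\mathbb{E}_{q_{-i}}[\partial_i\log q(\mathbf{x})-\partial_i\log p(\mathbf{x})]\big)^2\big]$, where $\mathbb{E}_{q_{-i}}$ is the expectation over coordinates other than $x_i$ under $q$. *)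

theory Defs
  imports "HOL-Analysis.Analysis"
begin

definition gauss_dens :: "real^'n \<Rightarrow> real" where
  "gauss_dens x = (2 * pi) powr (- real CARD('n) / 2) * exp (- (norm x)\<^sup>2 / 2)"

definition gauss_measure :: "(real^'n) measure" where
  "gauss_measure = density lborel (\<lambda>x. ennreal (gauss_dens x))"

definition dens_measure :: "(real^'n \<Rightarrow> real) \<Rightarrow> (real^'n) measure" where
  "dens_measure q = density lborel (\<lambda>x. ennreal (q x))"

definition partial :: "'n \<Rightarrow> (real^'n \<Rightarrow> real) \<Rightarrow> real^'n \<Rightarrow> real" where
  "partial i f x = deriv (\<lambda>t. f (x + t *\<^sub>R axis i 1)) 0"

definition upd_coord :: "real^'n \<Rightarrow> 'n \<Rightarrow> real \<Rightarrow> real^'n" where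
  "upd_coord y i t = (\<chi> j. if j = i then t else y $ j)"

definition rot_dens :: "real^'n^'n \<Rightarrow> (real^'n \<Rightarrow> real) \<Rightarrow> real^'n \<Rightarrow> real" where
  "rot_dens R p x = p (transpose R *v x)"

definition diag_mat :: "real^'n \<Rightarrow> real^'n^'n" where
  "diag_mat \<nu> = (\<chi> i j. if i = j then \<nu> $ i else 0)"

text \<open>tilde I(q,p) for a product density q: the inner expectation over q_{-i} with x_i
  fixed is written as the q-expectation over y with coordinate i replaced by x_i
  (integrating the i-th coordinate of a product density against a function not
  depending on it is trivial).\<close>
definition tildeI :: "(real^'n \<Rightarrow> real) \<Rightarrow> (real^'n \<Rightarrow> real) \<Rightarrow> real" where
  "tildeI q p = (\<Sum>i\<in>UNIV.
     integral\<^sup>L (dens_measure q) (\<lambda>x.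
       (integral\<^sup>L (dens_measure q) (\<lambda>y.
          partial i (\<lambda>z. ln (q z)) (upd_coord y i (x $ i))
          - partial i (\<lambda>z. ln (p z)) (upd_coord y i (x $ i))))\<^sup>2))"

end

theory Submission
  imports Defs "HOL-Probability.Probability"
begin

(*
  For an orthogonal R the squared diagonal of R H R^T is bounded by its squared Frobenius norm,
  which is invariant under orthogonal conjugation and therefore equals the sum of the squared
  eigenvalues, i.e. the squared diagonal of V^T H V.

  For the bound on tilde I take q = gamma and R = V^T. The i-th inner expectation is
  F_i(x_i) = E_y[h_i(y with y_i := x_i)], where h_i(z) = - z_i - (V^T grad log p (V z))_i is the
  difference of the two scores. Exchanging the i-th coordinates of two independent standard
  Gaussian vectors preserves their joint law, so y with y_i := x_i is again standard Gaussian
  and E[x_i F_i(x_i)] = E[z_i h_i(z)], which by rotation invariance of gamma equals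
  -(V^T H V)_ii = - nu_i. Since E[x_i^2] = 1, Cauchy-Schwarz gives E[F_i^2] >= nu_i^2.
*)

section \<open>Lebesgue measure under orthogonal maps\<close>

lemma linear_borel_measurable:
  fixes f :: "'a::euclidean_space \<Rightarrow> 'b::euclidean_space"
  shows "linear f \<Longrightarrow> f \<in> borel_measurable borel"
  by (simp add: borel_measurable_continuous_onI linear_continuous_on linear_linear)

lemma lborel_distr_basis_perm:
  fixes f :: "'a::euclidean_space \<Rightarrow> 'b::euclidean_space"
  assumes lin: "linear f" and bij: "bij_betw f Basis Basis"
  shows "distr lborel borel f = lborel"
proof (rule lborel_eqI[symmetric])
  fix l u :: 'b
  assume lu: "\<And>b. b \<in> Basis \<Longrightarrow> l \<bullet> b \<le> u \<bullet> b"
  have fB: "f b \<in> Basis" if "b \<in> Basis" for b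
    using bij_betw_apply[OF bij that] .
  have inner_f: "f x \<bullet> f b = x \<bullet> b" if b: "b \<in> Basis" for x b
  proof -
    have "f x = (\<Sum>b'\<in>Basis. (x \<bullet> b') *\<^sub>R f b')"
      by (subst euclidean_representation[of x, symmetric])
        (simp add: linear_sum[OF lin] linear_scale[OF lin])
    also have "\<dots> \<bullet> f b = (\<Sum>b'\<in>Basis. (x \<bullet> b') * (if b' = b then 1 else 0))"
      using bij b fB unfolding inner_sum_left
      by (intro sum.cong refl) (auto simp: inner_Basis bij_betw_def inj_on_eq_iff)
    finally show ?thesis using b by (simp add: if_distrib[where f="\<lambda>c. _ * c"] cong: if_cong)
  qed
  define l' u' where "l' = (\<Sum>b\<in>Basis. (l \<bullet> f b) *\<^sub>R b)" and "u' = (\<Sum>b\<in>Basis. (u \<bullet> f b) *\<^sub>R b)"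
  have l': "l' \<bullet> b = l \<bullet> f b" and u': "u' \<bullet> b = u \<bullet> f b" if "b \<in> Basis" for b
    using that by (simp_all add: l'_def u'_def inner_sum_left inner_Basis if_distrib cong: if_cong)
  have "(\<forall>b'\<in>f ` Basis. P b') \<longleftrightarrow> (\<forall>b\<in>Basis. P (f b))" for P
    by simp
  then have ball_f: "(\<forall>b'\<in>Basis. P b') \<longleftrightarrow> (\<forall>b\<in>Basis. P (f b))" for P
    unfolding bij_betw_imp_surj_on[OF bij] .
  have "f -` box l u = box l' u'"
    by (auto simp: mem_box ball_f inner_f l' u')
  then have "emeasure (distr lborel borel f) (box l u) = emeasure lborel (box l' u')"
    using linear_borel_measurable[OF lin] by (simp add: emeasure_distr)
  also have "\<dots> = (\<Prod>b\<in>Basis. (u' - l') \<bullet> b)"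
    using lu fB by (intro emeasure_lborel_box) (simp add: l' u')
  also have "\<dots> = (\<Prod>b\<in>Basis. (u - l) \<bullet> b)"
    using prod.reindex_bij_betw[OF bij, of "\<lambda>b. (u - l) \<bullet> b"]
    by (simp add: inner_diff_left l' u')
  finally show "emeasure (distr lborel borel f) (box l u) = (\<Prod>b\<in>Basis. (u - l) \<bullet> b)" .
qed simp

lemma lborel_distr_vec_reindex:
  fixes \<sigma> :: "'b::finite \<Rightarrow> 'a::finite"
  assumes \<sigma>: "bij \<sigma>"
  shows "distr lborel borel (\<lambda>x::real^'a. (\<chi> j. x $ \<sigma> j) :: real^'b) = lborel"
proof (rule lborel_distr_basis_perm)
  show "linear (\<lambda>x::real^'a. (\<chi> j. x $ \<sigma> j) :: real^'b)"
    by (auto simp: linear_iff vec_eq_iff)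
  have axis: "(\<chi> j. axis a (1::real) $ \<sigma> j) = axis (inv \<sigma> a) 1" for a
    using \<sigma> by (auto simp: vec_eq_iff axis_def bij_inv_eq_iff)
  have axis': "(\<chi> i. axis b (1::real) $ inv \<sigma> i) = axis (\<sigma> b) 1" for b
    using \<sigma> by (auto simp: vec_eq_iff axis_def bij_is_inj bij_is_surj surj_f_inv_f)
  show "bij_betw (\<lambda>x::real^'a. (\<chi> j. x $ \<sigma> j) :: real^'b) Basis Basis"
    by (rule bij_betw_byWitness[where f'="\<lambda>y. \<chi> i. y $ inv \<sigma> i"])
       (use \<sigma> in \<open>auto simp: Basis_vec_def axis axis' vec_eq_iff bij_is_inj bij_is_surj
         surj_f_inv_f\<close>)
qed

lemma orthogonal_transformation_vec_reindex:
  fixes \<sigma> :: "'b::finite \<Rightarrow> 'a::finite"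
  assumes \<sigma>: "bij \<sigma>"
  shows "orthogonal_transformation (\<lambda>x::real^'a. (\<chi> j. x $ \<sigma> j) :: real^'b)"
  unfolding orthogonal_transformation
proof
  show "linear (\<lambda>x::real^'a. (\<chi> j. x $ \<sigma> j) :: real^'b)"
    by (auto simp: linear_iff vec_eq_iff)
  show "\<forall>x::real^'a. norm ((\<chi> j. x $ \<sigma> j) :: real^'b) = norm x"
  proof
    fix x :: "real^'a"
    show "norm ((\<chi> j. x $ \<sigma> j) :: real^'b) = norm x"
      using sum.reindex_bij_betw[OF \<sigma>, of "\<lambda>i. (x $ i)\<^sup>2"] by (simp add: norm_vec_def L2_set_def)
  qed
qed

lemma lborel_distr_orthogonal_wellorder:
  fixes f :: "(real, 'm::{finite,wellorder}) vec \<Rightarrow> (real, 'm) vec"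
  assumes f: "orthogonal_transformation f"
  shows "distr lborel borel f = lborel"
proof (rule lborel_eqI[symmetric])
  fix l u :: "(real, 'm) vec"
  assume lu: "\<And>b. b \<in> Basis \<Longrightarrow> l \<bullet> b \<le> u \<bullet> b"
  have f_inv: "orthogonal_transformation (inv f)"
    using f orthogonal_transformation_inv by blast
  have f_meas: "f \<in> borel_measurable borel"
    using linear_borel_measurable[OF orthogonal_transformation_linear[OF f]] .
  have "f -` box l u = inv f ` box l u"
    using f by (simp add: bij_vimage_eq_inv_image orthogonal_transformation_bij)
  moreover have "emeasure (distr lborel borel f) (box l u) = emeasure lebesgue (f -` box l u)"
    using f_meas measurable_sets_borel[OF f_meas, of "box l u"] by (simp add: emeasure_distr)
  ultimately have "emeasure (distr lborel borel f) (box l u)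
      = ennreal (measure lebesgue (inv f ` box l u))"
    using measurable_orthogonal_image[OF f_inv, of "box l u"] by (simp add: emeasure_eq_measure2)
  also have "\<dots> = emeasure lborel (box l u)"
    using measure_orthogonal_image[OF f_inv, of "box l u"] by (simp add: emeasure_eq_measure2)
  finally show "emeasure (distr lborel borel f) (box l u) = (\<Prod>b\<in>Basis. (u - l) \<bullet> b)"
    using lu by simp
qed simp

(* The library proves invariance of Lebesgue measure under orthogonal maps only for well-ordered
   index types; a copy of the index type with an arbitrary well-order transfers it to real^'n. *)
typedef 'a ordered_copy = "UNIV :: 'a set" by simp

instance ordered_copy :: (finite) finite
proof
  have "(UNIV :: 'a ordered_copy set) = Abs_ordered_copy ` UNIV"
    by (metis Abs_ordered_copy_cases surj_def)
  then show "finite (UNIV :: 'a ordered_copy set)"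
    by (metis finite finite_imageI)
qed

definition copy_index :: "'a::finite ordered_copy \<Rightarrow> nat" where
  "copy_index = (SOME f. inj f)"

lemma inj_copy_index: "inj (copy_index :: 'a::finite ordered_copy \<Rightarrow> nat)"
proof -
  have "\<exists>f :: 'a ordered_copy \<Rightarrow> nat. inj f"
    using finite_imp_inj_to_nat_seg[of "UNIV :: 'a ordered_copy set"] by blast
  then show ?thesis unfolding copy_index_def by (rule someI_ex)
qed

instantiation ordered_copy :: (finite) wellorder
begin

definition less_eq_ordered_copy :: "'a ordered_copy \<Rightarrow> 'a ordered_copy \<Rightarrow> bool" where
  "less_eq_ordered_copy x y \<longleftrightarrow> copy_index x \<le> copy_index y"

definition less_ordered_copy :: "'a ordered_copy \<Rightarrow> 'a ordered_copy \<Rightarrow> bool" where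
  "less_ordered_copy x y \<longleftrightarrow> copy_index x < copy_index y"

instance
proof
  fix P :: "'a ordered_copy \<Rightarrow> bool" and a
  assume "\<And>x. (\<And>y. y < x \<Longrightarrow> P y) \<Longrightarrow> P x"
  then show "P a"
    unfolding less_ordered_copy_def by (induct a rule: measure_induct_rule[of copy_index]) blast
next
  fix x y :: "'a ordered_copy"
  show "x \<le> y \<Longrightarrow> y \<le> x \<Longrightarrow> x = y"
    using inj_copy_index unfolding less_eq_ordered_copy_def by (meson antisym injD)
qed (auto simp: less_eq_ordered_copy_def less_ordered_copy_def)

end

lemma lborel_distr_orthogonal:
  fixes f :: "real^'n \<Rightarrow> real^'n"
  assumes f: "orthogonal_transformation f"
  shows "distr lborel borel f = lborel"
proof -
  define to_copy :: "real^'n \<Rightarrow> real^'n ordered_copy"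
    where "to_copy x = (\<chi> j. x $ Rep_ordered_copy j)" for x
  define of_copy :: "real^'n ordered_copy \<Rightarrow> real^'n"
    where "of_copy y = (\<chi> i. y $ Abs_ordered_copy i)" for y
  have "bij (Rep_ordered_copy :: 'n ordered_copy \<Rightarrow> 'n)" "bij (Abs_ordered_copy :: 'n \<Rightarrow> 'n ordered_copy)"
    by (metis Abs_ordered_copy_inverse Rep_ordered_copy_inverse UNIV_I bij_betw_byWitness subsetI)+
  then have to_copy: "orthogonal_transformation to_copy" "distr lborel borel to_copy = lborel"
    and of_copy: "orthogonal_transformation of_copy" "distr lborel borel of_copy = lborel"
    unfolding to_copy_def of_copy_def
    by (simp_all add: orthogonal_transformation_vec_reindex lborel_distr_vec_reindex)
  define f' where "f' = to_copy \<circ> f \<circ> of_copy"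
  have "orthogonal_transformation f'"
    unfolding f'_def using to_copy(1) f of_copy(1) by (intro orthogonal_transformation_compose)
  then have "distr lborel borel f' = lborel"
    by (rule lborel_distr_orthogonal_wellorder)
  moreover have "distr (distr (distr lborel borel to_copy) borel f') borel of_copy = distr lborel borel f"
  proof -
    have "f = of_copy \<circ> (f' \<circ> to_copy)"
      by (auto simp: f'_def fun_eq_iff to_copy_def of_copy_def vec_eq_iff Abs_ordered_copy_inverse
          Rep_ordered_copy_inverse)
    moreover have "to_copy \<in> borel_measurable borel" "f' \<in> borel_measurable borel"
      "of_copy \<in> borel_measurable borel"
      using to_copy(1) \<open>orthogonal_transformation f'\<close> of_copy(1)
      by (simp_all add: linear_borel_measurable orthogonal_transformation_linear)
    ultimately show ?thesis
      by (simp add: distr_distr)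
  qed
  ultimately show ?thesis
    using to_copy(2) of_copy(2) by simp
qed

section \<open>The standard Gaussian measure\<close>

lemma distr_density_lborel_invariant:
  fixes T :: "'a::euclidean_space \<Rightarrow> 'a"
  assumes T: "T \<in> borel_measurable borel" and T_lborel: "distr lborel borel T = lborel"
    and D: "D \<in> borel_measurable borel" and D_T: "\<And>x. D (T x) = D x"
  shows "distr (density lborel D) borel T = density lborel D"
proof -
  have "density lborel D = density (distr lborel borel T) D"
    by (simp add: T_lborel)
  also have "\<dots> = distr (density lborel (\<lambda>x. D (T x))) borel T"
    using D T by (intro density_distr) (simp_all add: measurable_lborel1)
  also have "\<dots> = distr (density lborel D) borel T"
    by (simp add: D_T)
  finally show ?thesis ..
qed

lemma upd_coord_nth [simp]: "upd_coord y i t $ j = (if j = i then t else y $ j)"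
  by (simp add: upd_coord_def)

lemma norm_sq_cart: "(norm (x::real^'n))\<^sup>2 = (\<Sum>i\<in>UNIV. (x $ i)\<^sup>2)"
  by (simp add: norm_vec_def L2_set_def sum_nonneg)

lemma gauss_dens_nonneg: "0 \<le> gauss_dens x"
  by (simp add: gauss_dens_def)

lemma gauss_dens_borel [measurable]: "gauss_dens \<in> borel_measurable borel"
  unfolding gauss_dens_def by measurable

lemma sets_gauss_measure [simp]: "sets gauss_measure = sets borel"
  by (simp add: gauss_measure_def)

lemma measurable_gauss_measure_iff [simp]: "measurable gauss_measure N = measurable borel N"
  by (rule measurable_cong_sets[OF sets_gauss_measure refl])

lemma gauss_dens_eq_prod: "gauss_dens (x::real^'n) = (\<Prod>i\<in>UNIV. std_normal_density (x $ i))"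
proof -
  have "(\<Prod>i\<in>UNIV. std_normal_density (x $ i))
      = (1 / sqrt (2 * pi)) ^ CARD('n) * (\<Prod>i\<in>UNIV. exp (- ((x $ i)\<^sup>2) / 2))"
    unfolding std_normal_density_def prod.distrib by simp
  also have "(\<Prod>i\<in>UNIV. exp (- ((x $ i)\<^sup>2) / 2)) = exp (- ((norm x)\<^sup>2) / 2)"
    by (simp add: exp_sum[symmetric] norm_sq_cart sum_divide_distrib sum_negf)
  also have "(1 / sqrt (2 * pi)) ^ CARD('n) = ((2 * pi) powr (-1/2)) ^ CARD('n)"
    by (simp add: powr_half_sqrt[symmetric] powr_minus_divide)
  also have "\<dots> = (2 * pi) powr (- real CARD('n) / 2)"
    by (simp add: powr_power)
  finally show ?thesis
    by (simp add: gauss_dens_def)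
qed

lemma nn_integral_gauss_prod:
  fixes f :: "'n::finite \<Rightarrow> real \<Rightarrow> real"
  assumes [measurable]: "\<And>i. f i \<in> borel_measurable borel" and nonneg: "\<And>i t. 0 \<le> f i t"
  shows "(\<integral>\<^sup>+x. ennreal (gauss_dens (x::real^'n) * (\<Prod>i\<in>UNIV. f i (x $ i))) \<partial>lborel)
       = (\<Prod>i\<in>UNIV. \<integral>\<^sup>+t. ennreal (std_normal_density t * f i t) \<partial>lborel)"
proof -
  define F where "F b t = ennreal (std_normal_density t * f (axis_index b) t)"
    for b :: "real^'n" and t
  have Basis_eq: "(Basis :: (real^'n) set) = (\<lambda>i. axis i 1) ` UNIV"
    and inj_axis: "inj (\<lambda>i::'n. axis i (1::real))"
    by (auto simp: Basis_vec_def inj_def axis_eq_axis)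
  have prod_Basis: "(\<Prod>b\<in>Basis. G b) = (\<Prod>i\<in>UNIV. G (axis i 1 :: real^'n))" for G :: "_ \<Rightarrow> ennreal"
    unfolding Basis_eq using prod.reindex[OF inj_axis, of G] by (simp add: comp_def)
  have "(\<Prod>b\<in>Basis. F b (x \<bullet> b)) = ennreal (gauss_dens x * (\<Prod>i\<in>UNIV. f i (x $ i)))" for x
    by (simp add: prod_Basis F_def cart_eq_inner_axis[symmetric] gauss_dens_eq_prod prod_ennreal
        prod.distrib nonneg)
  then have "(\<integral>\<^sup>+x. ennreal (gauss_dens (x::real^'n) * (\<Prod>i\<in>UNIV. f i (x $ i))) \<partial>lborel)
      = (\<integral>\<^sup>+x. (\<Prod>b\<in>Basis. F b (x \<bullet> b)) \<partial>lborel)"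
    by simp
  also have "\<dots> = (\<Prod>b\<in>Basis. \<integral>\<^sup>+t. F b t \<partial>lborel)"
    by (rule nn_integral_lborel_prod) (simp_all add: F_def)
  also have "\<dots> = (\<Prod>i\<in>UNIV. \<integral>\<^sup>+t. F (axis i 1) t \<partial>lborel)"
    by (rule prod_Basis)
  finally show ?thesis
    by (simp add: F_def)
qed

lemma nn_integral_gauss_dens: "(\<integral>\<^sup>+x. ennreal (gauss_dens (x::real^'n)) \<partial>lborel) = 1"
proof -
  have "(\<integral>\<^sup>+x. ennreal (gauss_dens (x::real^'n)) \<partial>lborel)
      = (\<Prod>i\<in>(UNIV::'n set). \<integral>\<^sup>+t. ennreal (std_normal_density t) \<partial>lborel)"
    using nn_integral_gauss_prod[of "\<lambda>(_::'n) _. 1::real"] by simp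
  moreover have "(\<integral>\<^sup>+t. ennreal (std_normal_density t) \<partial>lborel) = 1"
    by (subst nn_integral_eq_integral) auto
  ultimately show ?thesis
    by simp
qed

lemma prob_space_gauss_measure: "prob_space (gauss_measure :: (real^'n) measure)"
  by (rule prob_spaceI) (simp add: gauss_measure_def emeasure_density nn_integral_gauss_dens)

lemma nn_integral_gauss_measure:
  assumes "f \<in> borel_measurable borel" "\<And>x. 0 \<le> f x"
  shows "(\<integral>\<^sup>+x. ennreal (f x) \<partial>gauss_measure) = (\<integral>\<^sup>+x. ennreal (gauss_dens x * f x) \<partial>lborel)"
  unfolding gauss_measure_def using assms
  by (simp add: nn_integral_density ennreal_mult gauss_dens_nonneg)

lemma has_bochner_integral_gauss_component_sq:
  "has_bochner_integral gauss_measure (\<lambda>x::real^'n. (x $ i)\<^sup>2) 1"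
proof (rule has_bochner_integral_nn_integral)
  have "has_bochner_integral lborel (\<lambda>t. std_normal_density t * t ^ (2 * 1))
      (fact (2 * 1) / (2 ^ 1 * fact 1))"
    by (rule std_normal_moment_even)
  then have "(\<integral>\<^sup>+t. ennreal (std_normal_density t * (if j = i then t\<^sup>2 else 1)) \<partial>lborel) = 1" for j
    by (cases "j = i") (auto simp: has_bochner_integral_iff nn_integral_eq_integral)
  then have "(\<integral>\<^sup>+x. ennreal (gauss_dens x * (x $ i)\<^sup>2) \<partial>lborel) = 1"
    using nn_integral_gauss_prod[of "\<lambda>j t. if j = i then t\<^sup>2 else 1"] by (simp add: prod.delta)
  then show "(\<integral>\<^sup>+x. ennreal ((x $ i)\<^sup>2) \<partial>gauss_measure) = ennreal 1"
    by (simp add: nn_integral_gauss_measure)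
qed auto

lemma nn_integral_gauss_exp_norm_sq:
  "(\<integral>\<^sup>+x. ennreal (gauss_dens (x::real^'n) * exp ((norm x)\<^sup>2 / 4)) \<partial>lborel) < \<infinity>"
proof -
  have "std_normal_density t * exp (t\<^sup>2 / 4) = sqrt 2 * normal_density 0 (sqrt 2) t" for t
  proof -
    have "exp (- t\<^sup>2 / 2) * exp (t\<^sup>2 / 4) = exp (- t\<^sup>2 / 4)"
      by (simp add: exp_add[symmetric])
    moreover have "sqrt (2 * pi * (sqrt 2)\<^sup>2) = sqrt 2 * sqrt (2 * pi)"
      by (simp add: real_sqrt_mult[symmetric])
    ultimately show ?thesis
      by (simp add: std_normal_density_def normal_density_def field_simps)
  qed
  then have "(\<integral>\<^sup>+t. ennreal (std_normal_density t * exp (t\<^sup>2 / 4)) \<partial>lborel)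
      = ennreal (sqrt 2) * (\<integral>\<^sup>+t. ennreal (normal_density 0 (sqrt 2) t) \<partial>lborel)"
    by (simp add: ennreal_mult nn_integral_cmult)
  also have "(\<integral>\<^sup>+t. ennreal (normal_density 0 (sqrt 2) t) \<partial>lborel) = 1"
    by (subst nn_integral_eq_integral) auto
  finally have "(\<integral>\<^sup>+t. ennreal (std_normal_density t * exp (t\<^sup>2 / 4)) \<partial>lborel) = ennreal (sqrt 2)"
    by simp
  moreover have "exp ((norm x)\<^sup>2 / 4) = (\<Prod>i\<in>UNIV. exp ((x $ i)\<^sup>2 / 4))" for x :: "real^'n"
    by (simp add: exp_sum[symmetric] norm_sq_cart sum_divide_distrib)
  ultimately show ?thesis
    using nn_integral_gauss_prod[of "\<lambda>(_::'n) t. exp (t\<^sup>2 / 4)"] by (simp add: ennreal_power)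
qed

lemma gauss_dens_orthogonal:
  fixes f :: "real^'n \<Rightarrow> real^'n"
  shows "orthogonal_transformation f \<Longrightarrow> gauss_dens (f x) = gauss_dens x"
  by (simp add: gauss_dens_def orthogonal_transformation_norm)

lemma distr_gauss_measure_orthogonal:
  fixes f :: "real^'n \<Rightarrow> real^'n"
  assumes f: "orthogonal_transformation f"
  shows "distr gauss_measure borel f = gauss_measure"
  unfolding gauss_measure_def
  using f by (intro distr_density_lborel_invariant lborel_distr_orthogonal linear_borel_measurable
      orthogonal_transformation_linear) (auto simp: gauss_dens_orthogonal)

lemma integral_gauss_orthogonal:
  fixes f :: "real^'n \<Rightarrow> real^'n" and \<phi> :: "real^'n \<Rightarrow> real"
  assumes f: "orthogonal_transformation f" and \<phi>: "\<phi> \<in> borel_measurable borel"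
  shows "(\<integral>z. \<phi> (f z) \<partial>gauss_measure) = (\<integral>x. \<phi> x \<partial>gauss_measure)"
  using integral_distr[of f gauss_measure borel \<phi>] \<phi>
    linear_borel_measurable[OF orthogonal_transformation_linear[OF f]]
  by (simp add: distr_gauss_measure_orthogonal[OF f])

section \<open>Resampling all coordinates but one\<close>

definition swap_coord :: "'n::finite \<Rightarrow> (real^'n) \<times> (real^'n) \<Rightarrow> (real^'n) \<times> (real^'n)" where
  "swap_coord i z = (upd_coord (fst z) i (snd z $ i), upd_coord (snd z) i (fst z $ i))"

lemma swap_coord_swap_coord [simp]: "swap_coord i (swap_coord i z) = z"
  by (simp add: swap_coord_def vec_eq_iff prod_eq_iff)

lemma linear_swap_coord: "linear (swap_coord i)"
  by (rule linearI) (simp_all add: swap_coord_def vec_eq_iff)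

lemma lborel_distr_swap_coord: "distr lborel borel (swap_coord i) = lborel"
proof (rule lborel_distr_basis_perm[OF linear_swap_coord])
  have swap_axis:
    "swap_coord i (axis j 1, 0) = (if j = i then (0, axis i 1) else (axis j (1::real), 0))"
    "swap_coord i (0, axis j 1) = (if j = i then (axis i 1, 0) else (0, axis j (1::real)))" for j
    by (auto simp: swap_coord_def vec_eq_iff axis_def)
  have in_Basis: "(u, 0) \<in> Basis" "(0, u) \<in> Basis" if "u \<in> Basis" for u :: "real^'n"
    using that by (auto simp: Basis_prod_def)
  have "swap_coord i b \<in> Basis" if "b \<in> Basis" for b
  proof -
    obtain j where "b = (axis j 1, 0) \<or> b = (0, axis j 1)"
      using \<open>b \<in> Basis\<close> unfolding Basis_prod_def Basis_vec_def by auto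
    then show ?thesis
      by (cases "j = i") (auto simp: swap_axis in_Basis)
  qed
  then show "bij_betw (swap_coord i) Basis Basis"
    by (intro bij_betw_byWitness[where f'="swap_coord i"]) auto
qed

lemma gauss_pair_measure_eq:
  "(gauss_measure \<Otimes>\<^sub>M gauss_measure :: ((real^'n) \<times> (real^'n)) measure)
    = density lborel (\<lambda>z. ennreal (gauss_dens (fst z) * gauss_dens (snd z)))"
proof -
  have "sigma_finite_measure (gauss_measure :: (real^'n) measure)"
    using prob_space_gauss_measure by (rule prob_space_imp_sigma_finite)
  then have "(gauss_measure \<Otimes>\<^sub>M gauss_measure :: ((real^'n) \<times> (real^'n)) measure)
     = density (lborel \<Otimes>\<^sub>M lborel) (\<lambda>(x, y). ennreal (gauss_dens x) * ennreal (gauss_dens y))"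
    unfolding gauss_measure_def
    by (intro pair_measure_density) (auto simp: lborel.sigma_finite_measure_axioms)
  also have "(\<lambda>(x, y). ennreal (gauss_dens x) * ennreal (gauss_dens y))
      = (\<lambda>z::(real^'n) \<times> (real^'n). ennreal (gauss_dens (fst z) * gauss_dens (snd z)))"
    by (auto simp: fun_eq_iff ennreal_mult gauss_dens_nonneg)
  finally show ?thesis
    by (simp add: lborel_prod)
qed

lemma distr_gauss_pair_swap_coord:
  fixes i :: "'n::finite"
  shows "distr (gauss_measure \<Otimes>\<^sub>M gauss_measure) borel (swap_coord i)
    = gauss_measure \<Otimes>\<^sub>M gauss_measure"
proof -
  have "gauss_dens (upd_coord x i (y $ i)) * gauss_dens (upd_coord y i (x $ i))
      = gauss_dens x * gauss_dens y" for x y :: "real^'n"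
  proof -
    have "(\<Prod>j\<in>UNIV. std_normal_density (upd_coord x i (y $ i) $ j)
          * std_normal_density (upd_coord y i (x $ i) $ j))
        = (\<Prod>j\<in>UNIV. std_normal_density (x $ j) * std_normal_density (y $ j))"
      by (rule prod.cong) auto
    then show ?thesis
      by (simp add: gauss_dens_eq_prod prod.distrib)
  qed
  then show ?thesis
    unfolding gauss_pair_measure_eq
    by (intro distr_density_lborel_invariant lborel_distr_swap_coord linear_borel_measurable
        linear_swap_coord) (auto simp: borel_prod[symmetric] swap_coord_def)
qed

lemma integrable_mult_of_square_integrable:
  fixes f g :: "'a \<Rightarrow> real"
  assumes [measurable]: "f \<in> borel_measurable M" "g \<in> borel_measurable M"
    and "integrable M (\<lambda>x. (f x)\<^sup>2)" "integrable M (\<lambda>x. (g x)\<^sup>2)"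
  shows "integrable M (\<lambda>x. f x * g x)"
proof (rule Bochner_Integration.integrable_bound)
  show "integrable M (\<lambda>x. (f x)\<^sup>2 + (g x)\<^sup>2)"
    using assms by simp
  have "\<bar>f x * g x\<bar> \<le> (f x)\<^sup>2 + (g x)\<^sup>2" for x
  proof -
    have "2 * (\<bar>f x\<bar> * \<bar>g x\<bar>) \<le> (f x)\<^sup>2 + (g x)\<^sup>2"
      using zero_le_power2[of "\<bar>f x\<bar> - \<bar>g x\<bar>"] by (simp add: power2_diff)
    then show ?thesis
      unfolding abs_mult using mult_nonneg_nonneg[OF abs_ge_zero abs_ge_zero, of "f x" "g x"]
      by linarith
  qed
  then show "AE x in M. norm (f x * g x) \<le> norm ((f x)\<^sup>2 + (g x)\<^sup>2)"
    by simp
qed measurable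

lemma integral_mult_square_le:
  fixes X Y :: "'a \<Rightarrow> real"
  assumes X: "integrable M (\<lambda>x. (X x)\<^sup>2)" and Y: "integrable M (\<lambda>x. (Y x)\<^sup>2)"
    and XY: "integrable M (\<lambda>x. X x * Y x)" and X_norm: "(\<integral>x. (X x)\<^sup>2 \<partial>M) = 1"
  shows "(\<integral>x. X x * Y x \<partial>M)\<^sup>2 \<le> (\<integral>x. (Y x)\<^sup>2 \<partial>M)"
proof -
  define a where "a = (\<integral>x. X x * Y x \<partial>M)"
  have "(\<lambda>x. (Y x - a * X x)\<^sup>2) = (\<lambda>x. (Y x)\<^sup>2 - 2 * a * (X x * Y x) + a\<^sup>2 * (X x)\<^sup>2)"
    by (auto simp: fun_eq_iff power2_diff power_mult_distrib algebra_simps)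
  then have "(\<integral>x. (Y x - a * X x)\<^sup>2 \<partial>M) = (\<integral>x. (Y x)\<^sup>2 \<partial>M) - a\<^sup>2"
    using X Y XY X_norm by (simp add: a_def power2_eq_square)
  moreover have "0 \<le> (\<integral>x. (Y x - a * X x)\<^sup>2 \<partial>M)"
    by simp
  ultimately show ?thesis
    by (simp add: a_def)
qed

lemma distr_pair_measure_snd:
  assumes M: "prob_space M" and N: "sigma_finite_measure N"
  shows "distr (M \<Otimes>\<^sub>M N) N snd = N"
proof (rule measure_eqI)
  fix A assume "A \<in> sets (distr (M \<Otimes>\<^sub>M N) N snd)"
  then have A: "A \<in> sets N" by simp
  have "snd -` A \<inter> space (M \<Otimes>\<^sub>M N) = space M \<times> A"
    using sets.sets_into_space[OF A] by (auto simp: space_pair_measure)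
  then have "emeasure (distr (M \<Otimes>\<^sub>M N) N snd) A = emeasure (M \<Otimes>\<^sub>M N) (space M \<times> A)"
    using A by (simp add: emeasure_distr)
  also have "\<dots> = emeasure M (space M) * emeasure N A"
    using A by (simp add: sigma_finite_measure.emeasure_pair_measure_Times[OF N])
  finally show "emeasure (distr (M \<Otimes>\<^sub>M N) N snd) A = emeasure N A"
    using M by (simp add: prob_space.emeasure_space_1)
qed simp

lemma sets_gauss_pair_measure:
  "sets (gauss_measure \<Otimes>\<^sub>M gauss_measure) = sets (borel :: ((real^'n) \<times> (real^'n)) measure)"
  by (metis borel_prod sets_gauss_measure sets_pair_measure_cong)

lemma measurable_gauss_pair_measure_iff [simp]:
  "measurable (gauss_measure \<Otimes>\<^sub>M gauss_measure) N
    = measurable (borel :: ((real^'n) \<times> (real^'n)) measure) N"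
  by (intro measurable_cong_sets sets_gauss_pair_measure refl)

definition resample_coord :: "'n::finite \<Rightarrow> (real^'n) \<times> (real^'n) \<Rightarrow> real^'n" where
  "resample_coord i z = upd_coord (snd z) i (fst z $ i)"

lemma resample_coord_borel [measurable]: "resample_coord i \<in> borel_measurable borel"
proof -
  have "linear (resample_coord i)"
    by (rule linearI) (simp_all add: resample_coord_def vec_eq_iff)
  then show ?thesis
    by (rule linear_borel_measurable)
qed

lemma distr_gauss_pair_resample_coord:
  fixes i :: "'n::finite"
  shows "distr (gauss_measure \<Otimes>\<^sub>M gauss_measure) borel (resample_coord i) = gauss_measure"
proof -
  have swap: "swap_coord i \<in> measurable (gauss_measure \<Otimes>\<^sub>M gauss_measure) (borel \<Otimes>\<^sub>M borel)"
    using linear_borel_measurable[OF linear_swap_coord]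
    by (simp add: measurable_cong_sets[OF sets_gauss_pair_measure refl] borel_prod)
  have "resample_coord i = snd \<circ> swap_coord i"
    by (simp add: fun_eq_iff resample_coord_def swap_coord_def)
  then have "distr (gauss_measure \<Otimes>\<^sub>M gauss_measure) borel (resample_coord i)
      = distr (distr (gauss_measure \<Otimes>\<^sub>M gauss_measure) (borel \<Otimes>\<^sub>M borel) (swap_coord i)) borel snd"
    using distr_distr[OF measurable_snd swap] by simp
  also have "\<dots> = distr ((gauss_measure :: (real^'n) measure) \<Otimes>\<^sub>M gauss_measure) gauss_measure snd"
    by (rule distr_cong) (simp_all add: borel_prod distr_gauss_pair_swap_coord)
  also have "\<dots> = gauss_measure"
    by (simp add: distr_pair_measure_snd prob_space_gauss_measure prob_space_imp_sigma_finite)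
  finally show ?thesis .
qed

lemma integrable_gauss_pair_resample_coord_iff:
  fixes f :: "real^'n \<Rightarrow> real" and i :: 'n
  assumes "f \<in> borel_measurable borel"
  shows "integrable (gauss_measure \<Otimes>\<^sub>M gauss_measure) (\<lambda>z. f (resample_coord i z))
    \<longleftrightarrow> integrable gauss_measure f"
  using integrable_distr_eq[of "resample_coord i" "gauss_measure \<Otimes>\<^sub>M gauss_measure" borel f] assms
  by (simp add: distr_gauss_pair_resample_coord)

lemma integral_gauss_pair_resample_coord:
  fixes f :: "real^'n \<Rightarrow> real" and i :: 'n
  assumes "f \<in> borel_measurable borel"
  shows "integral\<^sup>L (gauss_measure \<Otimes>\<^sub>M gauss_measure) (\<lambda>z. f (resample_coord i z))
    = integral\<^sup>L gauss_measure f"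
  using integral_distr[of "resample_coord i" "gauss_measure \<Otimes>\<^sub>M gauss_measure" borel f] assms
  by (simp add: distr_gauss_pair_resample_coord)

lemma resample_coord_Pair [simp]: "resample_coord i (x, y) = upd_coord y i (x $ i)"
  by (simp add: resample_coord_def)

lemma integrable_square_integral_resample_coord:
  fixes h :: "real^'n \<Rightarrow> real" and i :: 'n
  assumes h_borel [measurable]: "h \<in> borel_measurable borel"
    and h_sq: "integrable gauss_measure (\<lambda>z. (h z)\<^sup>2)"
  shows "integrable gauss_measure (\<lambda>x. (\<integral>y. h (upd_coord y i (x $ i)) \<partial>gauss_measure)\<^sup>2)"
proof -
  interpret G: prob_space "gauss_measure :: (real^'n) measure"
    by (rule prob_space_gauss_measure)
  interpret GG: pair_sigma_finite "gauss_measure :: (real^'n) measure"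
      "gauss_measure :: (real^'n) measure"
    by (simp add: pair_sigma_finite_def prob_space_imp_sigma_finite prob_space_gauss_measure)
  define F where "F x = (\<integral>y. h (upd_coord y i (x $ i)) \<partial>gauss_measure)" for x :: "real^'n"
  define G where "G x = (\<integral>y. (h (upd_coord y i (x $ i)))\<^sup>2 \<partial>gauss_measure)" for x :: "real^'n"
  have "integrable gauss_measure h"
    using h_sq by (rule G.square_integrable_imp_integrable[rotated]) simp
  then have h_R: "integrable (gauss_measure \<Otimes>\<^sub>M gauss_measure) (\<lambda>z. h (resample_coord i z))"
    by (simp add: integrable_gauss_pair_resample_coord_iff)
  have h_sq_R: "integrable (gauss_measure \<Otimes>\<^sub>M gauss_measure) (\<lambda>z. (h (resample_coord i z))\<^sup>2)"
    using h_sq integrable_gauss_pair_resample_coord_iff[of "\<lambda>z. (h z)\<^sup>2" i] by simp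
  have G_int: "integrable gauss_measure G"
    using GG.integrable_fst'[OF h_sq_R] by (simp add: G_def[abs_def])
  have "(\<lambda>(x, y). h (upd_coord y i (x $ i))) \<in> borel_measurable (gauss_measure \<Otimes>\<^sub>M gauss_measure)"
    using measurable_compose[OF resample_coord_borel h_borel, of i]
    by (simp add: case_prod_beta resample_coord_def)
  then have F_borel: "F \<in> borel_measurable gauss_measure"
    unfolding F_def[abs_def] by (rule G.borel_measurable_lebesgue_integral)
  have "AE x in gauss_measure. (F x)\<^sup>2 \<le> G x"
    using GG.AE_integrable_fst'[OF h_R] GG.AE_integrable_fst'[OF h_sq_R]
  proof eventually_elim
    case (elim x)
    then show ?case
      using integral_mult_square_le[of gauss_measure "\<lambda>_. 1" "\<lambda>y. h (upd_coord y i (x $ i))"]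
        G.prob_space by (simp add: F_def G_def)
  qed
  then have le_G: "AE x in gauss_measure. norm ((F x)\<^sup>2) \<le> norm (G x)"
    by eventually_elim auto
  have "integrable gauss_measure (\<lambda>x. (F x)\<^sup>2)"
    by (rule Bochner_Integration.integrable_bound[OF G_int _ le_G]) (use F_borel in measurable)
  then show ?thesis
    by (simp add: F_def)
qed

lemma integral_component_mult_square_le:
  fixes h :: "real^'n \<Rightarrow> real" and i :: 'n
  assumes h_borel [measurable]: "h \<in> borel_measurable borel"
    and h_sq: "integrable gauss_measure (\<lambda>z. (h z)\<^sup>2)"
  shows "(\<integral>z. z $ i * h z \<partial>gauss_measure)\<^sup>2
    \<le> (\<integral>x. (\<integral>y. h (upd_coord y i (x $ i)) \<partial>gauss_measure)\<^sup>2 \<partial>gauss_measure)"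
proof -
  interpret GG: pair_sigma_finite "gauss_measure :: (real^'n) measure"
      "gauss_measure :: (real^'n) measure"
    by (simp add: pair_sigma_finite_def prob_space_imp_sigma_finite prob_space_gauss_measure)
  define F where "F x = (\<integral>y. h (upd_coord y i (x $ i)) \<partial>gauss_measure)" for x :: "real^'n"
  have comp_sq: "integrable gauss_measure (\<lambda>z::real^'n. (z $ i)\<^sup>2)"
    "(\<integral>z. (z $ i)\<^sup>2 \<partial>gauss_measure) = 1"
    using has_bochner_integral_gauss_component_sq[of i] by (simp_all add: has_bochner_integral_iff)
  then have "integrable gauss_measure (\<lambda>z. z $ i * h z)"
    using h_sq by (intro integrable_mult_of_square_integrable) simp_all
  then have k: "integrable (gauss_measure \<Otimes>\<^sub>M gauss_measure)
      (\<lambda>p. resample_coord i p $ i * h (resample_coord i p))"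
    using integrable_gauss_pair_resample_coord_iff[of "\<lambda>z. z $ i * h z" i] by simp
  have "(\<integral>x. x $ i * F x \<partial>gauss_measure)
      = (\<integral>x. (\<integral>y. resample_coord i (x, y) $ i * h (resample_coord i (x, y))
          \<partial>gauss_measure) \<partial>gauss_measure)"
    by (simp add: F_def)
  also have "\<dots> = (\<integral>z. z $ i * h z \<partial>gauss_measure)"
    using GG.integral_fst'[OF k] integral_gauss_pair_resample_coord[of "\<lambda>z. z $ i * h z" i] by simp
  finally have XF: "(\<integral>x. x $ i * F x \<partial>gauss_measure) = (\<integral>z. z $ i * h z \<partial>gauss_measure)" .
  have "integrable gauss_measure (\<lambda>x. x $ i * F x)"
    using GG.integrable_fst'[OF k] by (simp add: F_def)
  moreover have "integrable gauss_measure (\<lambda>x. (F x)\<^sup>2)"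
    unfolding F_def by (rule integrable_square_integral_resample_coord[OF h_borel h_sq])
  ultimately have "(\<integral>x. x $ i * F x \<partial>gauss_measure)\<^sup>2 \<le> (\<integral>x. (F x)\<^sup>2 \<partial>gauss_measure)"
    using comp_sq by (intro integral_mult_square_le) simp_all
  then have "(\<integral>z. z $ i * h z \<partial>gauss_measure)\<^sup>2 \<le> (\<integral>x. (F x)\<^sup>2 \<partial>gauss_measure)"
    by (simp only: XF)
  then show ?thesis
    by (simp only: F_def)
qed

section \<open>A growth envelope\<close>

lemma powr_le_exp_square:
  fixes m t :: real
  assumes "0 \<le> m" "0 \<le> t"
  shows "t powr m \<le> exp (2 * m\<^sup>2) * exp (t\<^sup>2 / 8)"
proof (cases "t = 0")
  case False
  then have "m * ln t \<le> m * t"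
    using assms ln_le_minus_one[of t] by (intro mult_left_mono) auto
  also have "m * t \<le> 2 * m\<^sup>2 + t\<^sup>2 / 8"
    using zero_le_power2[of "t / 4 - m"] by (simp add: power2_diff field_simps power2_eq_square)
  finally have "exp (m * ln t) \<le> exp (2 * m\<^sup>2 + t\<^sup>2 / 8)"
    by simp
  then show ?thesis
    using False assms by (simp add: powr_def exp_add mult.commute)
qed simp

(* Polynomially bounded functions are O(envelope), while envelope^2 = exp (|x|^2 / 4) is still
   Gaussian-integrable; so products of two such functions are integrable. *)
definition envelope :: "real^'n \<Rightarrow> real" where
  "envelope x = exp ((norm x)\<^sup>2 / 8)"

lemma envelope_pos: "0 < envelope x"
  by (simp add: envelope_def)

lemma envelope_borel [measurable]: "envelope \<in> borel_measurable borel"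
  unfolding envelope_def by measurable

lemma norm_le_envelope: "norm x \<le> exp 2 * envelope x"
  using powr_le_exp_square[of 1 "norm x"] by (simp add: envelope_def)

lemma norm_le_envelope_of_poly_growth:
  fixes g :: "real^'n \<Rightarrow> 'b::real_normed_vector"
  assumes "0 \<le> c" "0 \<le> m" and g_le: "\<And>x. norm (g x) \<le> c * (1 + norm x powr m)"
  shows "norm (g x) \<le> c * (1 + exp (2 * m\<^sup>2)) * envelope x"
proof -
  have "1 \<le> envelope x"
    by (simp add: envelope_def)
  moreover have "norm x powr m \<le> exp (2 * m\<^sup>2) * envelope x"
    using powr_le_exp_square[of m "norm x"] assms by (simp add: envelope_def)
  ultimately have "1 + norm x powr m \<le> (1 + exp (2 * m\<^sup>2)) * envelope x"
    by (simp add: algebra_simps)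
  then have "c * (1 + norm x powr m) \<le> c * ((1 + exp (2 * m\<^sup>2)) * envelope x)"
    using \<open>0 \<le> c\<close> by (rule mult_left_mono)
  then show ?thesis
    using g_le[of x] by (simp add: mult.assoc)
qed

lemma integrable_gauss_of_norm_le_envelope_sq:
  fixes f :: "real^'n \<Rightarrow> 'b::{banach, second_countable_topology}"
  assumes "f \<in> borel_measurable borel" and le: "\<And>x. norm (f x) \<le> K * (envelope x)\<^sup>2"
  shows "integrable gauss_measure f"
proof (rule Bochner_Integration.integrable_bound)
  have "(\<integral>\<^sup>+x. ennreal ((envelope (x::real^'n))\<^sup>2) \<partial>gauss_measure) < \<infinity>"
    using nn_integral_gauss_exp_norm_sq[where 'n='n]
    by (simp add: nn_integral_gauss_measure envelope_def power2_eq_square exp_add[symmetric])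
  then have "integrable gauss_measure (\<lambda>x::real^'n. (envelope x)\<^sup>2)"
    by (intro integrableI_nonneg) (auto simp: less_top)
  then show "integrable gauss_measure (\<lambda>x::real^'n. K * (envelope x)\<^sup>2)"
    by simp
  show "AE x in gauss_measure. norm (f x) \<le> norm (K * (envelope x)\<^sup>2)"
    using le by (intro AE_I2) (smt (verit) real_norm_def abs_ge_self)
qed (use assms in simp)

lemma square_integrable_gauss_of_le_envelope:
  fixes f :: "real^'n \<Rightarrow> real"
  assumes "f \<in> borel_measurable borel" and le: "\<And>x. \<bar>f x\<bar> \<le> K * envelope x"
  shows "integrable gauss_measure (\<lambda>x. (f x)\<^sup>2)"
proof (rule integrable_gauss_of_norm_le_envelope_sq)
  show "norm ((f x)\<^sup>2) \<le> K\<^sup>2 * (envelope x)\<^sup>2" for x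
    using power_mono[OF le abs_ge_zero, of x 2] by (simp add: power_mult_distrib)
qed (use assms in measurable)

section \<open>Partial derivatives of log-densities\<close>

lemma partial_eq_gderiv:
  fixes f :: "real^'n \<Rightarrow> real"
  assumes "GDERIV f w :> G"
  shows "partial i f w = G $ i"
proof -
  have "((\<lambda>t. w + t *\<^sub>R axis i 1) has_derivative (\<lambda>s. s *\<^sub>R axis i 1)) (at 0)"
    by (intro derivative_eq_intros) auto
  moreover have "(f has_derivative (\<lambda>h. h \<bullet> G)) (at (w + 0 *\<^sub>R axis i 1))"
    using assms by (simp add: gderiv_def)
  ultimately have "((\<lambda>t. f (w + t *\<^sub>R axis i 1)) has_derivative (\<lambda>s. (s *\<^sub>R axis i 1) \<bullet> G)) (at 0)"
    by (rule has_derivative_compose[where g = f])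
  moreover have "(\<lambda>s. (s *\<^sub>R axis i 1) \<bullet> G) = (\<lambda>s. G $ i * s)"
    by (auto simp: fun_eq_iff inner_axis')
  ultimately have "((\<lambda>t. f (w + t *\<^sub>R axis i 1)) has_real_derivative G $ i) (at 0)"
    by (simp add: has_field_derivative_def)
  then show ?thesis
    unfolding partial_def by (rule DERIV_imp_deriv)
qed

lemma gderiv_matrix_vector_mult:
  fixes f :: "real^'n \<Rightarrow> real" and A :: "real^'m^'n"
  assumes "GDERIV f (A *v w) :> G"
  shows "GDERIV (\<lambda>z. f (A *v z)) w :> transpose A *v G"
proof -
  have "((\<lambda>z. f (A *v z)) has_derivative (\<lambda>h. (A *v h) \<bullet> G)) (at w)"
    using has_derivative_compose[OF
        bounded_linear_imp_has_derivative[OF matrix_vector_mul_bounded_linear]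
        assms[unfolded gderiv_def]]
    by simp
  moreover have "(A *v h) \<bullet> G = h \<bullet> (transpose A *v G)" for h
    by (metis dot_lmul_matrix inner_commute transpose_matrix_vector)
  ultimately show ?thesis
    by (simp add: gderiv_def)
qed

lemma partial_ln_gauss_dens: "partial i (\<lambda>z. ln (gauss_dens z)) (w::real^'n) = - (w $ i)"
proof -
  define C :: real where "C = (2 * pi) powr (- real CARD('n) / 2)"
  have "ln (gauss_dens z) = ln C - (z \<bullet> z) / 2" for z :: "real^'n"
    by (simp add: gauss_dens_def C_def ln_mult power2_norm_eq_inner)
  moreover have "((\<lambda>z. ln C - (z \<bullet> z) / 2) has_derivative (\<lambda>h. 0 - (h \<bullet> w + w \<bullet> h) / 2)) (at w)"
    by (intro derivative_eq_intros) auto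
  then have "GDERIV (\<lambda>z. ln C - (z \<bullet> z) / 2) w :> - w"
    unfolding gderiv_def by (simp add: inner_commute)
  ultimately show ?thesis
    by (simp add: partial_eq_gderiv)
qed

lemma partial_ln_rot_dens:
  fixes p :: "real^'n \<Rightarrow> real" and g :: "real^'n \<Rightarrow> real^'n"
  assumes "\<And>x. GDERIV (\<lambda>y. ln (p y)) x :> g x"
  shows "partial i (\<lambda>z. ln (rot_dens R p z)) w = (R *v g (transpose R *v w)) $ i"
  using gderiv_matrix_vector_mult[OF assms, of "transpose R" w]
  by (simp add: rot_dens_def partial_eq_gderiv)

section \<open>The Frobenius norm\<close>

lemma norm_matrix_sq: "(norm (A::real^'m^'n))\<^sup>2 = (\<Sum>i\<in>UNIV. \<Sum>j\<in>UNIV. (A $ i $ j)\<^sup>2)"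
  by (simp add: norm_vec_def L2_set_def sum_nonneg)

lemma norm_matrix_sq_columns: "(norm (A::real^'m^'n))\<^sup>2 = (\<Sum>j\<in>UNIV. (norm (column j A))\<^sup>2)"
  unfolding norm_matrix_sq norm_sq_cart column_def by (subst sum.swap) simp

lemma norm_transpose_matrix: "norm (transpose (A::real^'m^'n)) = norm A"
proof -
  have "(norm (transpose A))\<^sup>2 = (norm A)\<^sup>2"
    unfolding norm_matrix_sq transpose_def by (subst sum.swap) simp
  then show ?thesis
    by simp
qed

lemma norm_orthogonal_matrix_vector_mult:
  "orthogonal_matrix (V::real^'n^'n) \<Longrightarrow> norm (V *v x) = norm x"
  by (simp add: orthogonal_transformation_matrix orthogonal_transformation_norm)

lemma norm_orthogonal_matrix_mult:
  fixes R A :: "real^'n^'n"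
  assumes "orthogonal_matrix R"
  shows "norm (R ** A) = norm A"
proof -
  have "column j (R ** A) = R *v column j A" for j
    by (simp add: vec_eq_iff column_def matrix_matrix_mult_def matrix_vector_mult_def)
  then have "(norm (R ** A))\<^sup>2 = (norm A)\<^sup>2"
    by (simp add: norm_matrix_sq_columns norm_orthogonal_matrix_vector_mult[OF assms])
  then show ?thesis
    by simp
qed

lemma norm_mult_transpose_orthogonal_matrix:
  fixes R A :: "real^'n^'n"
  assumes "orthogonal_matrix R"
  shows "norm (A ** transpose R) = norm A"
proof -
  have "A ** transpose R = transpose (R ** transpose A)"
    by (simp add: matrix_transpose_mul)
  then show ?thesis
    by (simp add: norm_transpose_matrix norm_orthogonal_matrix_mult[OF assms])
qed

lemma sum_diag_sq_le_norm_sq: "(\<Sum>i\<in>UNIV. (A $ i $ i)\<^sup>2) \<le> (norm (A::real^'n^'n))\<^sup>2"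
  unfolding norm_matrix_sq by (intro sum_mono member_le_sum) auto

lemma norm_diag_mat_sq: "(norm (diag_mat \<nu>))\<^sup>2 = (\<Sum>i\<in>UNIV. (\<nu> $ i)\<^sup>2)"
  unfolding norm_matrix_sq diag_mat_def by (simp add: if_distrib[where f="\<lambda>u. u\<^sup>2"] cong: if_cong)

lemma orthogonal_conj_diag:
  assumes "orthogonal_matrix (V::real^'n^'n)" "H = V ** diag_mat \<nu> ** transpose V"
  shows "transpose V ** H ** V = diag_mat \<nu>"
proof -
  have "transpose V ** H ** V = (transpose V ** V) ** diag_mat \<nu> ** (transpose V ** V)"
    by (simp add: assms(2) matrix_mul_assoc)
  then show ?thesis
    using assms(1) by (simp add: orthogonal_matrix_def)
qed

lemma norm_outer_product: "norm (\<chi> a b. x $ a * y $ b :: real^'m^'n) = norm x * norm y"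
proof -
  have "(norm (\<chi> a b. x $ a * y $ b :: real^'m^'n))\<^sup>2 = (norm x * norm y)\<^sup>2"
    by (simp add: norm_matrix_sq norm_sq_cart power_mult_distrib sum_product)
  then show ?thesis
    by (simp add: power2_eq_iff_nonneg)
qed

lemma diag_conj_outer_product:
  fixes V :: "real^'n^'n"
  shows "(transpose V ** (\<chi> a b. x $ a * y $ b) ** V) $ i $ i
    = (transpose V *v x) $ i * (transpose V *v y) $ i"
  by (simp add: matrix_matrix_mult_def matrix_vector_mult_def transpose_def sum_distrib_left
      sum_distrib_right mult_ac)

lemma sum_diag_sq_orthogonal_conj_le:
  fixes H V R :: "real^'n^'n"
  assumes V: "orthogonal_matrix V" and H_eig: "H = V ** diag_mat \<nu> ** transpose V"
    and R: "orthogonal_matrix R"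
  shows "(\<Sum>i\<in>UNIV. ((R ** H ** transpose R) $ i $ i)\<^sup>2)
    \<le> (\<Sum>i\<in>UNIV. ((transpose V ** H ** transpose (transpose V)) $ i $ i)\<^sup>2)"
proof -
  have "(\<Sum>i\<in>UNIV. ((R ** H ** transpose R) $ i $ i)\<^sup>2) \<le> (norm (R ** H ** transpose R))\<^sup>2"
    by (rule sum_diag_sq_le_norm_sq)
  also have "\<dots> = (norm (diag_mat \<nu>))\<^sup>2"
    using R V by (simp add: H_eig norm_orthogonal_matrix_mult norm_mult_transpose_orthogonal_matrix)
  also have "\<dots> = (\<Sum>i\<in>UNIV. ((transpose V ** H ** transpose (transpose V)) $ i $ i)\<^sup>2)"
    using orthogonal_conj_diag[OF V H_eig] by (simp add: norm_diag_mat_sq) (simp add: diag_mat_def)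
  finally show ?thesis .
qed

lemma integrable_gauss_outer_product:
  fixes g :: "real^'n \<Rightarrow> real^'n"
  assumes g_cont: "continuous_on UNIV g" and g_le: "\<And>x. norm (g x) \<le> D * envelope x"
  shows "integrable gauss_measure (\<lambda>x. \<chi> a b. x $ a * (g x + x) $ b)"
proof (rule integrable_gauss_of_norm_le_envelope_sq)
  have "continuous_on UNIV (\<lambda>x. \<chi> a b. x $ a * (g x + x) $ b)"
    by (intro continuous_intros g_cont)
  then show "(\<lambda>x. \<chi> a b. x $ a * (g x + x) $ b) \<in> borel_measurable borel"
    by (rule borel_measurable_continuous_onI)
  fix x
  have "norm (g x + x) \<le> (D + exp 2) * envelope x"
    using norm_triangle_ineq[of "g x" x] g_le[of x] norm_le_envelope[of x]
    by (simp add: algebra_simps)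
  then have "norm x * norm (g x + x) \<le> (exp 2 * envelope x) * ((D + exp 2) * envelope x)"
    using norm_le_envelope[of x] envelope_pos[of x] by (intro mult_mono) auto
  then show "norm (\<chi> a b. x $ a * (g x + x) $ b) \<le> (exp 2 * (D + exp 2)) * (envelope x)\<^sup>2"
    unfolding norm_outer_product by (simp add: power2_eq_square mult_ac)
qed

lemma eigenvalue_eq_gauss_integral:
  fixes g :: "real^'n \<Rightarrow> real^'n" and H V :: "real^'n^'n" and \<nu> :: "real^'n"
  assumes g_cont: "continuous_on UNIV g" and g_le: "\<And>x. norm (g x) \<le> D * envelope x"
    and H_def: "H = (\<integral>x. (\<chi> a b. x $ a * (g x + x) $ b) \<partial>gauss_measure)"
    and V: "orthogonal_matrix V" and H_eig: "H = V ** diag_mat \<nu> ** transpose V"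
  shows "\<nu> $ i = (\<integral>z. z $ i * ((transpose V *v g (V *v z)) $ i + z $ i) \<partial>gauss_measure)"
proof -
  define f where "f x = (\<chi> a b. x $ a * (g x + x) $ b :: real^'n^'n)" for x :: "real^'n"
  define L where "L M = (transpose V ** M ** V) $ i $ i" for M :: "real^'n^'n"
  have "linear L"
    by (rule linearI) (simp_all add: L_def matrix_matrix_mult_def sum.distrib sum_distrib_left
        algebra_simps)
  then have L: "bounded_linear L"
    by (simp add: linear_conv_bounded_linear)
  have f_int: "integrable gauss_measure f"
    unfolding f_def by (rule integrable_gauss_outer_product[OF g_cont g_le])
  have f_borel: "f \<in> borel_measurable borel"
    using borel_measurable_integrable[OF f_int] by simp
  define \<phi> where "\<phi> x = (transpose V *v x) $ i * (transpose V *v (g x + x)) $ i" for x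
  have L_f: "L (f x) = \<phi> x" for x
    by (simp only: L_def f_def \<phi>_def diag_conj_outer_product)
  have \<phi>_borel: "\<phi> \<in> borel_measurable borel"
    using measurable_compose[OF f_borel linear_borel_measurable[OF \<open>linear L\<close>]] by (simp add: L_f)
  have "\<nu> $ i = L H"
    using orthogonal_conj_diag[OF V H_eig] by (simp add: L_def diag_mat_def)
  also have "\<dots> = (\<integral>x. L (f x) \<partial>gauss_measure)"
    unfolding H_def f_def[symmetric] by (rule integral_bounded_linear[OF L f_int, symmetric])
  also have "\<dots> = (\<integral>x. \<phi> x \<partial>gauss_measure)"
    by (simp only: L_f)
  also have "\<dots> = (\<integral>z. \<phi> (V *v z) \<partial>gauss_measure)"
    using V \<phi>_borel by (intro integral_gauss_orthogonal[symmetric])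
      (simp_all add: orthogonal_transformation_matrix)
  also have "\<dots> = (\<integral>z. z $ i * ((transpose V *v g (V *v z)) $ i + z $ i) \<partial>gauss_measure)"
    using V
    by (simp add: \<phi>_def matrix_vector_mul_assoc orthogonal_matrix_def matrix_vector_right_distrib)
  finally show ?thesis .
qed

lemma score_difference_square_integrable:
  fixes g :: "real^'n \<Rightarrow> real^'n" and V :: "real^'n^'n" and i :: 'n
  assumes g_cont: "continuous_on UNIV g" and g_le: "\<And>x. norm (g x) \<le> D * envelope x"
    and V: "orthogonal_matrix V"
  defines "h \<equiv> \<lambda>z. - (z $ i) - (transpose V *v g (V *v z)) $ i"
  shows "h \<in> borel_measurable borel" and "integrable gauss_measure (\<lambda>z. (h z)\<^sup>2)"
proof -
  have V_norm: "norm (V *v z) = norm z" and Vt_norm: "norm (transpose V *v z) = norm z" for z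
    using V by (simp_all only: norm_orthogonal_matrix_vector_mult orthogonal_matrix_transpose)
  note mult_cont = linear_continuous_on[OF matrix_vector_mul_bounded_linear]
  have "continuous_on UNIV (\<lambda>z. g (V *v z))"
    by (rule continuous_on_compose2[OF g_cont mult_cont]) auto
  then have "continuous_on UNIV (\<lambda>z. transpose V *v g (V *v z))"
    by (rule continuous_on_compose2[OF mult_cont]) auto
  then have "continuous_on UNIV h"
    unfolding h_def by (intro continuous_intros)
  then show h_borel: "h \<in> borel_measurable borel"
    by (rule borel_measurable_continuous_onI)
  have "\<bar>h z\<bar> \<le> (exp 2 + D) * envelope z" for z
  proof -
    have env: "envelope (V *v z) = envelope z"
      by (simp add: envelope_def V_norm)
    have "\<bar>h z\<bar> \<le> norm z + norm (transpose V *v g (V *v z))"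
      unfolding h_def using component_le_norm_cart[of z i]
        component_le_norm_cart[of "transpose V *v g (V *v z)" i] by linarith
    also have "\<dots> \<le> exp 2 * envelope z + D * envelope z"
      using norm_le_envelope[of z] g_le[of "V *v z"] unfolding Vt_norm env by linarith
    finally show ?thesis
      by (simp add: algebra_simps)
  qed
  then show "integrable gauss_measure (\<lambda>z. (h z)\<^sup>2)"
    using h_borel by (intro square_integrable_gauss_of_le_envelope)
qed

theorem proposition1:
  fixes p :: "real^'n \<Rightarrow> real" and g :: "real^'n \<Rightarrow> real^'n"
    and c m :: real and H V :: "real^'n^'n" and \<nu> :: "real^'n"
  assumes p_pos: "\<And>x. p x > 0"
    and p_int: "integrable lborel p"
    and p_norm: "integral\<^sup>L lborel p = 1"
    and grad: "\<And>x. GDERIV (\<lambda>y. ln (p y)) x :> g x"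
    and grad_cont: "continuous_on UNIV g"
    and c_pos: "c > 0" and m_ge: "m \<ge> 2"
    and log_bound: "\<And>x. \<bar>ln (p x)\<bar> \<le> c * (1 + norm x powr m)"
    and grad_bound: "\<And>x. norm (g x) \<le> c * (1 + norm x powr m)"
    and H_def: "H = integral\<^sup>L gauss_measure (\<lambda>x. \<chi> i j. x $ i * (g x + x) $ j)"
    and H_sym: "transpose H = H"
    and V_orth: "orthogonal_matrix V"
    and H_eig: "H = V ** diag_mat \<nu> ** transpose V"
  shows "(\<forall>R. orthogonal_matrix R \<longrightarrow>
            (\<Sum>i\<in>UNIV. ((R ** H ** transpose R) $ i $ i)\<^sup>2)
            \<le> (\<Sum>i\<in>UNIV. ((transpose V ** H ** transpose (transpose V)) $ i $ i)\<^sup>2))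
         \<and> tildeI gauss_dens (rot_dens (transpose V) p) \<ge> (\<Sum>i\<in>UNIV. (\<nu> $ i)\<^sup>2)"
proof -
  define D where "D = c * (1 + exp (2 * m\<^sup>2))"
  have g_le: "norm (g x) \<le> D * envelope x" for x
    unfolding D_def using c_pos m_ge by (intro norm_le_envelope_of_poly_growth grad_bound) auto
  define h where "h i z = - (z $ i) - (transpose V *v g (V *v z)) $ i" for i and z :: "real^'n"
  have "tildeI gauss_dens (rot_dens (transpose V) p)
      = (\<Sum>i\<in>UNIV. \<integral>x. (\<integral>y. h i (upd_coord y i (x $ i)) \<partial>gauss_measure)\<^sup>2 \<partial>gauss_measure)"
    by (simp add: tildeI_def dens_measure_def gauss_measure_def[symmetric] h_def
        partial_ln_gauss_dens partial_ln_rot_dens[OF grad])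
  moreover have
    "(\<nu> $ i)\<^sup>2 \<le> (\<integral>x. (\<integral>y. h i (upd_coord y i (x $ i)) \<partial>gauss_measure)\<^sup>2 \<partial>gauss_measure)"
    for i
  proof -
    have "(\<lambda>z. z $ i * h i z) = (\<lambda>z. - (z $ i * ((transpose V *v g (V *v z)) $ i + z $ i)))"
      by (auto simp: fun_eq_iff h_def algebra_simps)
    then have "(\<integral>z. z $ i * h i z \<partial>gauss_measure) = - (\<nu> $ i)"
      using eigenvalue_eq_gauss_integral[OF grad_cont g_le H_def V_orth H_eig, of i] by simp
    then show ?thesis
      using integral_component_mult_square_le[of "h i" i]
        score_difference_square_integrable[OF grad_cont g_le V_orth, of i]
      by (simp add: h_def[abs_def])
  qed
  ultimately show ?thesis
    using sum_diag_sq_orthogonal_conj_le[OF V_orth H_eig] by (simp add: sum_mono)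
qed

end
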